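(* Let $X=\{0,1,2,3\}$ and let $a,b,c$ be the transformations of $X^\ast$ defined recursively (with $\emptyset\mapsto\emptyset$) by $a(0w)=1\,a(w)$, $a(1w)=0w$, $a(2w)=2w$, $a(3w)=3w$; $b(0w)=2\,b(w)$, $b(2w)=0w$, $b(1w)=1w$, $b(3w)=3w$; $c(0w)=3\,c(w)$, $c(3w)=0w$, $c(1w)=1w$, $c(2w)=2w$. For $n\ge1$ let $A_n=a_n+a_n^{-1}+b_n+b_n^{-1}+c_n+c_n^{-1}$, where $a_n,b_n,c_n$ are the permutation matrices of $a,b,c$ on $X^n$, let $P_n(\lambda)=\det(\lambda I-A_n)$ and $f(\lambda)=\lambda^2-4\lambda-6$, with $f^{\circ i}$ the $i$-fold iterate ($f^{\circ 0}=\mathrm{id}$). Then for every $n\ge1$ $$P_n(\lambda)=(\lambda-6)\prod_{i=0}^{n-1}\bigl(f^{\circ i}(\lambda)+2\bigr)\prod_{i=0}^{n-1}\bigl(f^{\circ i}(\lambda)-4\bigr)^{2\cdot 4^{\,n-i-1}}.$$ In particular, the spectrum of $A_n$ (as a multiset) is the disjoint union of $\{6\}$, the sets $f^{-i}(-2)$ for $i=0,\dots,n-1$ (each element with multiplicity one), and the sets $f^{-i}(4)$ for $i=0,\dots,n-1$, each element of $f^{-i}(4)$ counted with multiplicity $2\cdot 4^{n-i-1}$.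
   Context: $f^{-i}(x)$ denotes the set of $\lambda\in\mathbb{C}$ with $f^{\circ i}(\lambda)=x$. $A_n$ is the adjacency matrix of the $n$-th Schreier graph of the group generated by $a,b,c$. *)

theory Defs
  imports Complex_Main "HOL-Computational_Algebra.Polynomial" "Jordan_Normal_Form.Char_Poly"
begin

fun ga :: "nat list \<Rightarrow> nat list" where
  "ga [] = []"
| "ga (x # w) = (if x = 0 then 1 # ga w else if x = 1 then 0 # w else x # w)"

fun gb :: "nat list \<Rightarrow> nat list" where
  "gb [] = []"
| "gb (x # w) = (if x = 0 then 2 # gb w else if x = 2 then 0 # w else x # w)"

fun gc :: "nat list \<Rightarrow> nat list" where
  "gc [] = []"
| "gc (x # w) = (if x = 0 then 3 # gc w else if x = 3 then 0 # w else x # w)"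

text \<open>Enumeration of X^n by indices i < 4^n (base-4 digits, first letter = lowest digit).\<close>
definition word :: "nat \<Rightarrow> nat \<Rightarrow> nat list" where
  "word n i = map (\<lambda>k. i div 4 ^ k mod 4) [0..<n]"

text \<open>Permutation matrix of g on X^n: entry (u,v) is 1 iff g v = u; the inverse is its transpose.\<close>
definition perm_mat :: "(nat list \<Rightarrow> nat list) \<Rightarrow> nat \<Rightarrow> complex mat" where
  "perm_mat g n = mat (4 ^ n) (4 ^ n)
     (\<lambda>(i, j). if g (word n j) = word n i then 1 else 0)"

definition Amat :: "nat \<Rightarrow> complex mat" where
  "Amat n = perm_mat ga n + transpose_mat (perm_mat ga n)
          + perm_mat gb n + transpose_mat (perm_mat gb n)
          + perm_mat gc n + transpose_mat (perm_mat gc n)"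

definition ff :: "complex \<Rightarrow> complex" where
  "ff x = x ^ 2 - 4 * x - 6"

definition fpoly :: "complex poly" where
  "fpoly = [:-6, -4, 1:]"

definition fiter :: "nat \<Rightarrow> complex poly" where
  "fiter i = ((\<lambda>p. pcompose fpoly p) ^^ i) [:0, 1:]"

end

theory Submission
  imports Defs
begin

(* List the words of length m + 1 by their first letter. Since a, b, c move a word xw only
   when x is 0 or the letter of the generator, A_(m+1) becomes the block matrix
   [[0, L], [L^T, 4 I]], where L links each word 0w to the words 1w', 2w', 3w', and
   L L^T = 6 I + A_m. The Schur complement of the block 4 I therefore gives
   P_(m+1)(lambda) = (lambda - 4)^(2 * 4^m) P_m(f(lambda)), and iterating from P_0 = lambda - 6
   yields the product formula. Every root of f^i(lambda) + 2 or f^i(lambda) - 4 is simple: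
   by the chain rule the derivative of f^i vanishes only where some f^k(lambda) is the critical
   point 2 of f, and the orbit 2, -10, 134, ... of 2 stays real and never meets -2 or 4. *)

lemma sum_lessThan_mult_div_mod:
  fixes f :: "nat \<Rightarrow> nat \<Rightarrow> 'a::comm_monoid_add"
  shows "(\<Sum>k<a * n. f (k div n) (k mod n)) = (\<Sum>x<a. \<Sum>l<n. f x l)"
proof -
  have "(\<Sum>k<a * n. f (k div n) (k mod n)) = (\<Sum>x<a. \<Sum>k=x*n..<x*n+n. f (k div n) (k mod n))"
    by (rule sum.nat_group[symmetric])
  also have "\<dots> = (\<Sum>x<a. \<Sum>l<n. f x l)"
  proof (rule sum.cong[OF refl])
    fix x
    have "(\<Sum>k=x*n..<x*n+n. f (k div n) (k mod n)) = (\<Sum>l<n. f ((x*n + l) div n) ((x*n + l) mod n))"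
      by (subst sum.atLeastLessThan_shift_0) (simp add: atLeast0LessThan add.commute)
    also have "\<dots> = (\<Sum>l<n. f x l)"
      by (rule sum.cong) auto
    finally show "(\<Sum>k=x*n..<x*n+n. f (k div n) (k mod n)) = (\<Sum>l<n. f x l)" .
  qed
  finally show ?thesis .
qed

lemma det_permute_rows_cols:
  fixes A :: "'a::comm_ring_1 mat"
  assumes A: "A \<in> carrier_mat n n" and p: "p permutes {0..<n}"
  shows "det (mat n n (\<lambda>(i, j). A $$ (p i, p j))) = det A"
proof -
  let ?R = "mat n n (\<lambda>(i, j). A $$ (p i, j))"
  have p_less: "i < n \<Longrightarrow> p i < n" for i
    using p by (meson atLeastLessThan_iff permutes_in_image zero_le)
  have "transpose_mat (mat n n (\<lambda>(i, j). A $$ (p i, p j)))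
      = mat n n (\<lambda>(i, j). transpose_mat ?R $$ (p i, j))"
    by (rule eq_matI) (auto simp: p_less)
  then have "det (mat n n (\<lambda>(i, j). A $$ (p i, p j))) = signof p * det (transpose_mat ?R)"
    using det_permute_rows[of "transpose_mat ?R" n p] p
    by (metis det_transpose mat_carrier transpose_carrier_mat)
  also have "\<dots> = signof p * signof p * det A"
    using det_transpose[of ?R n] det_permute_rows[OF A p] by simp
  also have "signof p * signof p = (1::'a)"
    by (cases p rule: sign_cases) simp_all
  finally show ?thesis
    by simp
qed

lemma char_poly_permute_rows_cols:
  fixes A :: "'a::comm_ring_1 mat"
  assumes A: "A \<in> carrier_mat n n" and p: "p permutes {0..<n}"
  shows "char_poly (mat n n (\<lambda>(i, j). A $$ (p i, p j))) = char_poly A"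
proof -
  have p_less: "i < n \<Longrightarrow> p i < n" for i
    using p by (meson atLeastLessThan_iff permutes_in_image zero_le)
  have "char_poly_matrix (mat n n (\<lambda>(i, j). A $$ (p i, p j)))
      = mat n n (\<lambda>(i, j). char_poly_matrix A $$ (p i, p j))"
    using A p_less permutes_inj[OF p]
    by (intro eq_matI) (auto simp: char_poly_matrix_def inj_eq)
  then show ?thesis
    unfolding char_poly_def using det_permute_rows_cols[OF char_poly_matrix_closed[OF A] p] by simp
qed

lemma det_four_block_mat_lower_right_smult:
  fixes B1 :: "'a::field mat"
  assumes B1: "B1 \<in> carrier_mat n n" and B2: "B2 \<in> carrier_mat n k" and B3: "B3 \<in> carrier_mat k n"
    and \<mu>: "\<mu> \<noteq> 0"
  shows "det (four_block_mat B1 B2 B3 (\<mu> \<cdot>\<^sub>m 1\<^sub>m k)) = \<mu> ^ k * det (B1 - (1 / \<mu>) \<cdot>\<^sub>m (B2 * B3))"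
proof -
  let ?M = "four_block_mat B1 B2 B3 (\<mu> \<cdot>\<^sub>m 1\<^sub>m k)"
  let ?U = "four_block_mat (1\<^sub>m n) (0\<^sub>m n k) ((- 1 / \<mu>) \<cdot>\<^sub>m B3) (1\<^sub>m k)"
  have det_U: "det ?U = 1"
    using B3 by (subst det_four_block_mat_upper_right_zero[of _ n _ k]) auto
  have UL: "B1 * 1\<^sub>m n + B2 * ((- 1 / \<mu>) \<cdot>\<^sub>m B3) = B1 - (1 / \<mu>) \<cdot>\<^sub>m (B2 * B3)"
    using B1 B2 B3
    by (intro eq_matI) (auto simp: scalar_prod_def sum_distrib_left sum_negf algebra_simps)
  have LL: "B3 * 1\<^sub>m n + (\<mu> \<cdot>\<^sub>m 1\<^sub>m k) * ((- 1 / \<mu>) \<cdot>\<^sub>m B3) = 0\<^sub>m k n"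
  proof -
    have "(\<mu> \<cdot>\<^sub>m 1\<^sub>m k) * ((- 1 / \<mu>) \<cdot>\<^sub>m B3) = \<mu> \<cdot>\<^sub>m ((- 1 / \<mu>) \<cdot>\<^sub>m B3)"
      using B3 by (simp add: mult_smult_assoc_mat[of _ k k _ n])
    then show ?thesis
      using B3 \<mu> by (intro eq_matI) auto
  qed
  have "?M * ?U = four_block_mat (B1 * 1\<^sub>m n + B2 * ((- 1 / \<mu>) \<cdot>\<^sub>m B3)) (B1 * 0\<^sub>m n k + B2 * 1\<^sub>m k)
      (B3 * 1\<^sub>m n + (\<mu> \<cdot>\<^sub>m 1\<^sub>m k) * ((- 1 / \<mu>) \<cdot>\<^sub>m B3)) (B3 * 0\<^sub>m n k + (\<mu> \<cdot>\<^sub>m 1\<^sub>m k) * 1\<^sub>m k)"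
    using B1 B2 B3 by (intro mult_four_block_mat) auto
  also have "\<dots> = four_block_mat (B1 - (1 / \<mu>) \<cdot>\<^sub>m (B2 * B3)) B2 (0\<^sub>m k n) (\<mu> \<cdot>\<^sub>m 1\<^sub>m k)"
    unfolding UL LL using B1 B2 B3 by simp
  finally have MU: "?M * ?U = four_block_mat (B1 - (1 / \<mu>) \<cdot>\<^sub>m (B2 * B3)) B2 (0\<^sub>m k n) (\<mu> \<cdot>\<^sub>m 1\<^sub>m k)" .
  have "det ?M = det ?M * det ?U"
    using det_U by simp
  also have "\<dots> = det (?M * ?U)"
    using B1 B2 B3 by (intro det_mult[symmetric, of _ "n + k"]) auto
  also have "\<dots> = det (B1 - (1 / \<mu>) \<cdot>\<^sub>m (B2 * B3)) * det (\<mu> \<cdot>\<^sub>m 1\<^sub>m k)"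
    unfolding MU using B1 B2 B3 by (intro det_four_block_mat_lower_left_zero) auto
  finally show ?thesis
    by simp
qed

lemma poly_eqI_cofinite:
  fixes p q :: "'a::{idom, ring_char_0} poly"
  assumes "finite S" and "\<And>x. x \<notin> S \<Longrightarrow> poly p x = poly q x"
  shows "p = q"
proof (rule ccontr)
  assume "p \<noteq> q"
  then have "finite {x. poly (p - q) x = 0}"
    by (intro poly_roots_finite) simp
  moreover have "- S \<subseteq> {x. poly (p - q) x = 0}"
    using assms(2) by auto
  ultimately have "finite (UNIV :: 'a set)"
    using assms(1) by (metis finite_Un finite_subset Compl_partition)
  then show False
    by (simp add: infinite_UNIV_char_0)
qed

lemma pcompose_power_left: "(p ^ k) \<circ>\<^sub>p q = (p \<circ>\<^sub>p q) ^ k"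
  by (induction k) (simp_all add: pcompose_mult)

lemma order_prod:
  fixes f :: "'b \<Rightarrow> 'a::idom poly"
  assumes "\<And>i. i \<in> I \<Longrightarrow> f i \<noteq> 0"
  shows "order a (\<Prod>i\<in>I. f i) = (\<Sum>i\<in>I. order a (f i))"
  using assms
proof (induction I rule: infinite_finite_induct)
  case (insert i I)
  then show ?case
    by (simp add: order_mult)
qed simp_all

lemma order_power: "p \<noteq> 0 \<Longrightarrow> order a (p ^ k) = k * order a p"
  for p :: "'a::idom poly"
  by (induction k) (simp_all add: order_mult)

lemma order_eq_1I:
  fixes p :: "'a::{idom, semiring_char_0} poly"
  assumes "poly p a = 0" and "poly (pderiv p) a \<noteq> 0"
  shows "order a p = 1"
proof -
  have "p \<noteq> 0"
    using assms(2) by auto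
  then show ?thesis
    using order_pderiv[OF _ assms(1)] order_0I[OF assms(2)] by simp
qed

fun word_index :: "nat list \<Rightarrow> nat" where
  "word_index [] = 0"
| "word_index (x # w) = x + 4 * word_index w"

definition words :: "nat \<Rightarrow> nat list set" where
  "words m = {w. length w = m \<and> set w \<subseteq> {..<4}}"

lemma word_0 [simp]: "word 0 i = []"
  by (simp add: word_def)

lemma word_Suc: "word (Suc m) i = i mod 4 # word m (i div 4)"
  by (simp add: word_def upt_conv_Cons map_Suc_upt[symmetric] div_mult2_eq del: upt_Suc)

lemma word_in_words: "word m i \<in> words m"
  by (auto simp: words_def word_def)

lemma word_index_word: "i < 4 ^ m \<Longrightarrow> word_index (word m i) = i"
  by (induction m arbitrary: i) (simp_all add: word_Suc less_mult_imp_div_less mult.commute)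

lemma word_index_less: "w \<in> words m \<Longrightarrow> word_index w < 4 ^ m"
proof (induction w arbitrary: m)
  case (Cons x w)
  then obtain k where "m = Suc k" "x < 4" "w \<in> words k"
    by (cases m) (auto simp: words_def)
  moreover from Cons.IH \<open>w \<in> words k\<close> have "word_index w < 4 ^ k"
    by blast
  ultimately show ?case by simp
qed (simp add: words_def)

lemma word_word_index: "w \<in> words m \<Longrightarrow> word m (word_index w) = w"
proof (induction w arbitrary: m)
  case (Cons x w)
  then obtain k where "m = Suc k" "x < 4" "w \<in> words k"
    by (cases m) (auto simp: words_def)
  with Cons.IH show ?case by (simp add: word_Suc)
qed (simp add: words_def word_def)

lemma word_eq_iff: "i < 4 ^ m \<Longrightarrow> w \<in> words m \<Longrightarrow> word m i = w \<longleftrightarrow> i = word_index w"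
  using word_index_word word_word_index by metis

lemma word_inj_iff [simp]: "i < 4 ^ m \<Longrightarrow> j < 4 ^ m \<Longrightarrow> word m i = word m j \<longleftrightarrow> i = j"
  by (simp add: word_eq_iff word_in_words word_index_word)

lemma sum_word_indicator_mult:
  assumes "u \<in> words m"
  shows "(\<Sum>l<4 ^ m. of_bool (word m l = u) * of_bool (word m l = v)) = (of_bool (u = v) :: 'a::semiring_1)"
proof -
  have "(\<Sum>l<4 ^ m. of_bool (word m l = u) * of_bool (word m l = v))
      = (\<Sum>l<4 ^ m. if word m l = u then of_bool (word m l = v) else (0::'a))"
    by (intro sum.cong) auto
  also have "\<dots> = of_bool (word m (word_index u) = v)"
    using assms by (simp add: word_eq_iff word_index_less)
  finally show ?thesis
    using assms by (simp add: word_word_index)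
qed

fun gen :: "nat \<Rightarrow> nat list \<Rightarrow> nat list" where
  "gen y [] = []"
| "gen y (x # w) = (if x = 0 then y # gen y w else if x = y then 0 # w else x # w)"

lemma ga_eq_gen: "ga = gen 1" and gb_eq_gen: "gb = gen 2" and gc_eq_gen: "gc = gen 3"
proof -
  have "ga w = gen 1 w" "gb w = gen 2 w" "gc w = gen 3 w" for w
    by (induction w) simp_all
  then show "ga = gen 1" "gb = gen 2" "gc = gen 3"
    by blast+
qed

lemma gen_in_words: "y < 4 \<Longrightarrow> w \<in> words m \<Longrightarrow> gen y w \<in> words m"
  by (induction w arbitrary: m) (auto simp: words_def)

lemma inj_gen: "inj (gen y)"
proof (rule injI)
  show "gen y u = gen y v \<Longrightarrow> u = v" for u v
    by (induction u v rule: list_induct2') (auto split: if_splits)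
qed

definition adjacency :: "nat list \<Rightarrow> nat list \<Rightarrow> complex" where
  "adjacency u v = (\<Sum>y\<in>{1, 2, 3}. of_bool (gen y v = u) + of_bool (gen y u = v))"

lemma Amat_carrier [simp]: "Amat n \<in> carrier_mat (4 ^ n) (4 ^ n)"
  by (simp add: Amat_def perm_mat_def)

lemma dim_Amat [simp]: "dim_row (Amat n) = 4 ^ n" "dim_col (Amat n) = 4 ^ n"
  using Amat_carrier by blast+

lemma Amat_index:
  "i < 4 ^ n \<Longrightarrow> j < 4 ^ n \<Longrightarrow> Amat n $$ (i, j) = adjacency (word n i) (word n j)"
  by (simp add: Amat_def perm_mat_def adjacency_def ga_eq_gen gb_eq_gen gc_eq_gen)

lemma adjacency_sym: "adjacency u v = adjacency v u"
  by (simp add: adjacency_def)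

lemma adjacency_Cons_0_0: "adjacency (0 # u) (0 # v) = 0"
  by (simp add: adjacency_def)

lemma adjacency_Cons_0:
  "y \<in> {1, 2, 3} \<Longrightarrow> adjacency (0 # u) (y # v) = of_bool (v = u) + of_bool (gen y u = v)"
  by (auto simp: adjacency_def)

lemma adjacency_Cons:
  "y \<in> {1, 2, 3} \<Longrightarrow> z \<in> {1, 2, 3} \<Longrightarrow>
     adjacency (y # u) (z # v) = (if y = z \<and> u = v then 4 else 0)"
  by (auto simp: adjacency_def)

lemma sum_adjacency_Cons_0:
  assumes u: "u \<in> words m" and v: "v \<in> words m" and y: "y \<in> {1, 2, 3}"
  shows "(\<Sum>l<4 ^ m. adjacency (0 # u) (y # word m l) * adjacency (0 # v) (y # word m l))
    = 2 * of_bool (u = v) + of_bool (gen y v = u) + of_bool (gen y u = v)"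
proof -
  let ?\<delta> = "\<lambda>l x. of_bool (word m l = x) :: complex"
  have gu: "gen y u \<in> words m" and gv: "gen y v \<in> words m"
    using u v y by (auto intro: gen_in_words)
  have "(\<Sum>l<4 ^ m. adjacency (0 # u) (y # word m l) * adjacency (0 # v) (y # word m l))
      = (\<Sum>l<4 ^ m. (?\<delta> l u + ?\<delta> l (gen y u)) * (?\<delta> l v + ?\<delta> l (gen y v)))"
    using y by (intro sum.cong) (auto simp: adjacency_Cons_0 eq_commute[of "gen y _"])
  also have "\<dots> = of_bool (u = v) + of_bool (u = gen y v) + of_bool (gen y u = v)
      + of_bool (gen y u = gen y v)"
    unfolding distrib_left distrib_right sum.distrib
    by (simp only: sum_word_indicator_mult u gu add_ac)
  also have "\<dots> = 2 * of_bool (u = v) + of_bool (gen y v = u) + of_bool (gen y u = v)"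
    using inj_gen[of y] by (auto simp: inj_eq)
  finally show ?thesis .
qed

definition reorder :: "nat \<Rightarrow> nat \<Rightarrow> nat" where
  "reorder m k = (if k < 4 ^ Suc m then k div 4 ^ m + 4 * (k mod 4 ^ m) else k)"

lemma word_reorder:
  "k < 4 ^ Suc m \<Longrightarrow> word (Suc m) (reorder m k) = k div 4 ^ m # word m (k mod 4 ^ m)"
  using less_mult_imp_div_less[of k 4 "4 ^ m"] by (simp add: reorder_def word_Suc)

lemma reorder_less: "k < 4 ^ Suc m \<Longrightarrow> reorder m k < 4 ^ Suc m"
proof -
  assume k: "k < 4 ^ Suc m"
  then have "k div 4 ^ m < 4"
    by (simp add: less_mult_imp_div_less)
  moreover have "k mod 4 ^ m < 4 ^ m"
    by simp
  then have "4 * (k mod 4 ^ m) + 4 \<le> 4 * 4 ^ m"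
    by linarith
  ultimately show ?thesis
    using k by (simp add: reorder_def)
qed

lemma reorder_permutes: "reorder m permutes {0..<4 ^ Suc m}"
proof (rule bij_imp_permutes)
  let ?I = "{0..<4 ^ Suc m}"
  have "inj_on (reorder m) ?I"
  proof (rule inj_onI)
    fix k l assume "k \<in> ?I" "l \<in> ?I" "reorder m k = reorder m l"
    then have "k div 4 ^ m = l div 4 ^ m" "word m (k mod 4 ^ m) = word m (l mod 4 ^ m)"
      using word_reorder by (metis atLeastLessThan_iff list.inject)+
    then show "k = l"
      by (metis div_mult_mod_eq mod_less_divisor word_inj_iff zero_less_numeral zero_less_power)
  qed
  moreover have "reorder m ` ?I \<subseteq> ?I"
    using reorder_less by auto
  ultimately show "bij_betw (reorder m) ?I ?I"
    by (simp add: bij_betw_def endo_inj_surj)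
qed (simp add: reorder_def)

definition link_mat :: "nat \<Rightarrow> complex mat" where
  "link_mat m = mat (4 ^ m) (3 * 4 ^ m)
     (\<lambda>(j, k). adjacency (0 # word m j) (Suc (k div 4 ^ m) # word m (k mod 4 ^ m)))"

lemma link_mat_carrier: "link_mat m \<in> carrier_mat (4 ^ m) (3 * 4 ^ m)"
  by (simp add: link_mat_def)

lemma Amat_Suc_reorder:
  "mat (4 ^ Suc m) (4 ^ Suc m) (\<lambda>(i, j). Amat (Suc m) $$ (reorder m i, reorder m j))
   = four_block_mat (0\<^sub>m (4 ^ m) (4 ^ m)) (link_mat m) (transpose_mat (link_mat m))
       (4 \<cdot>\<^sub>m 1\<^sub>m (3 * 4 ^ m))"
  (is "?M = ?B")
proof (rule eq_matI)
  let ?N = "4 ^ m :: nat"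
  fix i j assume "i < dim_row ?B" "j < dim_col ?B"
  then have i: "i < 4 ^ Suc m" and j: "j < 4 ^ Suc m"
    by (auto simp: link_mat_def)
  have first_letter: "k div ?N \<in> {1, 2, 3}" if "?N \<le> k" "k < 4 * ?N" for k
    using that less_mult_imp_div_less[of k 4 ?N] div_greater_zero_iff[of k ?N] by auto
  have "?M $$ (i, j) = adjacency (word (Suc m) (reorder m i)) (word (Suc m) (reorder m j))"
    using i j by (simp add: Amat_index reorder_less del: power_Suc)
  then have M: "?M $$ (i, j) = adjacency (i div ?N # word m (i mod ?N)) (j div ?N # word m (j mod ?N))"
    by (simp only: word_reorder i j)
  show "?M $$ (i, j) = ?B $$ (i, j)"
  proof (cases "i < ?N"; cases "j < ?N")
    assume "i < ?N" "j < ?N"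
    then show ?thesis
      using M by (simp add: adjacency_Cons_0_0 link_mat_def)
  next
    assume "i < ?N" "\<not> j < ?N"
    then show ?thesis
      using M i j by (simp add: link_mat_def le_div_geq le_mod_geq)
  next
    assume "\<not> i < ?N" "j < ?N"
    then show ?thesis
      using M i j by (simp add: link_mat_def le_div_geq le_mod_geq adjacency_sym)
  next
    assume "\<not> i < ?N" "\<not> j < ?N"
    then have "i div ?N \<in> {1, 2, 3}" "j div ?N \<in> {1, 2, 3}"
      using i j first_letter by simp_all
    moreover have "i div ?N = j div ?N \<and> i mod ?N = j mod ?N \<longleftrightarrow> i = j"
      by (metis div_mult_mod_eq)
    ultimately show ?thesis
      using M \<open>\<not> i < ?N\<close> \<open>\<not> j < ?N\<close> i j by (simp add: adjacency_Cons) linarith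
  qed
qed (simp_all add: link_mat_def)

lemma link_mat_mult_transpose:
  "link_mat m * transpose_mat (link_mat m) = 6 \<cdot>\<^sub>m 1\<^sub>m (4 ^ m) + Amat m"
proof (rule eq_matI)
  let ?N = "4 ^ m :: nat" and ?w = "word m"
  fix j j' assume "j < dim_row (6 \<cdot>\<^sub>m 1\<^sub>m ?N + Amat m)" "j' < dim_col (6 \<cdot>\<^sub>m 1\<^sub>m ?N + Amat m)"
  then have j: "j < ?N" and j': "j' < ?N"
    by simp_all
  have "(link_mat m * transpose_mat (link_mat m)) $$ (j, j')
      = (\<Sum>k<3 * ?N. adjacency (0 # ?w j) (Suc (k div ?N) # ?w (k mod ?N))
                     * adjacency (0 # ?w j') (Suc (k div ?N) # ?w (k mod ?N)))"
    using j j' by (simp add: link_mat_def scalar_prod_def lessThan_atLeast0)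
  also have "\<dots> = (\<Sum>x<3. \<Sum>l<?N. adjacency (0 # ?w j) (Suc x # ?w l)
                                  * adjacency (0 # ?w j') (Suc x # ?w l))"
    by (rule sum_lessThan_mult_div_mod)
  also have "\<dots> = (\<Sum>x<3. 2 * of_bool (j = j') + of_bool (gen (Suc x) (?w j') = ?w j)
                                + of_bool (gen (Suc x) (?w j) = ?w j'))"
  proof (rule sum.cong[OF refl])
    fix x :: nat assume "x \<in> {..<3}"
    then show "(\<Sum>l<?N. adjacency (0 # ?w j) (Suc x # ?w l) * adjacency (0 # ?w j') (Suc x # ?w l))
      = 2 * of_bool (j = j') + of_bool (gen (Suc x) (?w j') = ?w j) + of_bool (gen (Suc x) (?w j) = ?w j')"
      using j j' by (subst sum_adjacency_Cons_0) (auto simp: word_in_words)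
  qed
  also have "\<dots> = 6 * of_bool (j = j') + adjacency (?w j) (?w j')"
    by (simp add: numeral_3_eq_3 numeral_2_eq_2 adjacency_def)
  also have "\<dots> = (6 \<cdot>\<^sub>m 1\<^sub>m ?N + Amat m) $$ (j, j')"
    using j j' by (simp add: Amat_index)
  finally show "(link_mat m * transpose_mat (link_mat m)) $$ (j, j') = (6 \<cdot>\<^sub>m 1\<^sub>m ?N + Amat m) $$ (j, j')" .
qed (simp_all add: link_mat_def)

lemma char_poly_Amat_Suc_block:
  "char_poly (Amat (Suc m)) = char_poly (four_block_mat (0\<^sub>m (4 ^ m) (4 ^ m)) (link_mat m)
     (transpose_mat (link_mat m)) (4 \<cdot>\<^sub>m 1\<^sub>m (3 * 4 ^ m)))"
  unfolding Amat_Suc_reorder[symmetric]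
  by (rule char_poly_permute_rows_cols[symmetric, OF Amat_carrier reorder_permutes])

lemma poly_char_poly_Amat_Suc:
  assumes "e \<noteq> 4"
  shows "poly (char_poly (Amat (Suc m))) e = (e - 4) ^ (2 * 4 ^ m) * poly (char_poly (Amat m)) (ff e)"
proof -
  let ?N = "4 ^ m :: nat" and ?L = "link_mat m"
  define \<mu> where "\<mu> = e - 4"
  have \<mu>: "\<mu> \<noteq> 0"
    using assms by (simp add: \<mu>_def)
  define M where "M = four_block_mat (0\<^sub>m ?N ?N) ?L (transpose_mat ?L) (4 \<cdot>\<^sub>m 1\<^sub>m (3 * ?N))"
  have M: "M \<in> carrier_mat (?N + 3 * ?N) (?N + 3 * ?N)"
    unfolding M_def by (rule four_block_carrier_mat) simp_all
  have L: "?L \<in> carrier_mat ?N (3 * ?N)"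
    by (rule link_mat_carrier)
  have "poly (char_poly (Amat (Suc m))) e = det (- char_matrix M e)"
    using char_poly_matrix[OF M] by (simp add: char_poly_Amat_Suc_block M_def)
  also have "- char_matrix M e
      = four_block_mat (e \<cdot>\<^sub>m 1\<^sub>m ?N) (- ?L) (- transpose_mat ?L) (\<mu> \<cdot>\<^sub>m 1\<^sub>m (3 * ?N))"
    using L by (intro eq_matI) (auto simp: M_def char_matrix_def \<mu>_def)
  also have "det \<dots> = \<mu> ^ (3 * ?N) * det (e \<cdot>\<^sub>m 1\<^sub>m ?N - (1 / \<mu>) \<cdot>\<^sub>m (- ?L * - transpose_mat ?L))"
    using L \<mu> by (intro det_four_block_mat_lower_right_smult) auto
  also have "- ?L * - transpose_mat ?L = 6 \<cdot>\<^sub>m 1\<^sub>m ?N + Amat m"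
    using L by (simp add: link_mat_mult_transpose)
  finally have char_Suc: "poly (char_poly (Amat (Suc m))) e
      = \<mu> ^ (3 * ?N) * det (e \<cdot>\<^sub>m 1\<^sub>m ?N - (1 / \<mu>) \<cdot>\<^sub>m (6 \<cdot>\<^sub>m 1\<^sub>m ?N + Amat m))" .
  define S where "S = e \<cdot>\<^sub>m 1\<^sub>m ?N - (1 / \<mu>) \<cdot>\<^sub>m (6 \<cdot>\<^sub>m 1\<^sub>m ?N + Amat m)"
  have S: "\<mu> \<cdot>\<^sub>m S = - char_matrix (Amat m) (ff e)"
    using \<mu> by (intro eq_matI) (auto simp: S_def char_matrix_def ff_def \<mu>_def field_simps power2_eq_square)
  have "dim_col S = ?N"
    by (simp add: S_def)
  then have "poly (char_poly (Amat m)) (ff e) = \<mu> ^ ?N * det S"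
    using char_poly_matrix[OF Amat_carrier, of m "ff e"] S by (metis det_smult)
  with char_Suc show ?thesis
    unfolding S_def[symmetric] \<mu>_def[symmetric] by (simp add: power_add[symmetric] mult.assoc[symmetric])
qed

lemma char_poly_Amat_Suc:
  "char_poly (Amat (Suc m)) = [:-4, 1:] ^ (2 * 4 ^ m) * (char_poly (Amat m) \<circ>\<^sub>p fpoly)"
proof (rule poly_eqI_cofinite[of "{4}"])
  show "poly (char_poly (Amat (Suc m))) e = poly ([:-4, 1:] ^ (2 * 4 ^ m) * (char_poly (Amat m) \<circ>\<^sub>p fpoly)) e"
    if "e \<notin> {4}" for e
    using that by (simp add: poly_char_poly_Amat_Suc poly_pcompose fpoly_def ff_def power2_eq_square algebra_simps)
qed simp

lemma char_poly_Amat_0: "char_poly (Amat 0) = [:-6, 1:]"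
proof -
  have "upper_triangular (Amat 0)" and "diag_mat (Amat 0) = [6]"
    by (auto simp: upper_triangular_def diag_mat_def Amat_index adjacency_def)
  then show ?thesis
    using char_poly_upper_triangular[OF Amat_carrier] by simp
qed

lemma fiter_0 [simp]: "fiter 0 = [:0, 1:]"
  by (simp add: fiter_def)

lemma fiter_Suc: "fiter (Suc i) = fpoly \<circ>\<^sub>p fiter i"
  by (simp add: fiter_def)

lemma fiter_Suc_right: "fiter (Suc i) = fiter i \<circ>\<^sub>p fpoly"
  by (induction i) (simp_all add: fiter_Suc pcompose_assoc)

lemma poly_fiter: "poly (fiter i) x = (ff ^^ i) x"
  by (induction i) (simp_all add: fiter_Suc poly_pcompose fpoly_def ff_def power2_eq_square algebra_simps)

lemma degree_fiter: "degree (fiter i) = 2 ^ i"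
proof -
  have "degree fpoly = 2"
    by (simp add: fpoly_def)
  then show ?thesis
    by (induction i) (simp_all add: fiter_Suc)
qed

lemma fiter_neq_const: "fiter i \<noteq> [:c:]"
  using degree_fiter[of i] by auto

lemma char_poly_Amat:
  "char_poly (Amat n) = [:-6, 1:] * (\<Prod>i<n. fiter i + [:2:]) * (\<Prod>i<n. (fiter i - [:4:]) ^ (2 * 4 ^ (n - i - 1)))"
proof (induction n)
  case 0
  then show ?case
    by (simp add: char_poly_Amat_0)
next
  case (Suc n)
  have "[:-6, 1:] \<circ>\<^sub>p fpoly = [:-6, 1:] * [:2, 1:]"
    by (simp add: fpoly_def)
  moreover have "(\<Prod>i<n. fiter i + [:2:]) \<circ>\<^sub>p fpoly = (\<Prod>i<n. fiter (Suc i) + [:2:])"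
    by (simp add: pcompose_prod pcompose_add fiter_Suc_right)
  moreover have "(\<Prod>i<n. (fiter i - [:4:]) ^ (2 * 4 ^ (n - i - 1))) \<circ>\<^sub>p fpoly
      = (\<Prod>i<n. (fiter (Suc i) - [:4:]) ^ (2 * 4 ^ (Suc n - Suc i - 1)))"
    by (simp add: pcompose_prod pcompose_diff pcompose_power_left fiter_Suc_right)
  moreover have "(\<Prod>i<Suc n. fiter i + [:2:]) = [:2, 1:] * (\<Prod>i<n. fiter (Suc i) + [:2:])"
    by (subst prod.lessThan_Suc_shift) simp
  moreover have "(\<Prod>i<Suc n. (fiter i - [:4:]) ^ (2 * 4 ^ (Suc n - i - 1)))
      = [:-4, 1:] ^ (2 * 4 ^ n) * (\<Prod>i<n. (fiter (Suc i) - [:4:]) ^ (2 * 4 ^ (Suc n - Suc i - 1)))"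
    by (subst prod.lessThan_Suc_shift) simp
  ultimately show ?case
    unfolding char_poly_Amat_Suc Suc.IH pcompose_mult by (simp only: mult_ac)
qed

lemma poly_pderiv_fiter: "poly (pderiv (fiter i)) x = (\<Prod>k<i. 2 * (ff ^^ k) x - 4)"
proof -
  have "pderiv fpoly = [:-4, 2:]"
    by (simp add: fpoly_def pderiv_pCons)
  then show ?thesis
    by (induction i) (simp_all add: fiter_Suc pderiv_pcompose poly_pcompose poly_fiter pderiv_pCons algebra_simps)
qed

lemma ff_of_real: "ff (complex_of_real r) = complex_of_real (r\<^sup>2 - 4 * r - 6)"
  by (simp add: ff_def)

lemma funpow_ff_2_real:
  "\<exists>r. (ff ^^ j) 2 = complex_of_real r \<and> (r = 2 \<or> r = -10 \<or> 7 \<le> r)"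
proof (induction j)
  case (Suc j)
  then obtain r where r: "(ff ^^ j) 2 = complex_of_real r" "r = 2 \<or> r = -10 \<or> 7 \<le> r"
    by blast
  have "r\<^sup>2 - 4 * r - 6 = -10 \<or> 7 \<le> r\<^sup>2 - 4 * r - 6"
  proof (cases "7 \<le> r")
    case True
    then have "0 \<le> (r - 7) * (r + 3)"
      by simp
    then show ?thesis
      by (simp add: power2_eq_square algebra_simps)
  qed (use r in auto)
  with r show ?case
    by (intro exI[of _ "r\<^sup>2 - 4 * r - 6"]) (simp add: ff_of_real)
qed (intro exI[of _ 2]; simp)

lemma funpow_ff_2_neq: "(ff ^^ j) 2 \<noteq> -2" "(ff ^^ j) 2 \<noteq> 4"
proof -
  obtain r where r: "(ff ^^ j) 2 = complex_of_real r" "r = 2 \<or> r = -10 \<or> 7 \<le> r"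
    using funpow_ff_2_real by blast
  then have "(ff ^^ j) 2 \<noteq> complex_of_real (-2)" "(ff ^^ j) 2 \<noteq> complex_of_real 4"
    by (auto simp only: of_real_eq_iff)
  then show "(ff ^^ j) 2 \<noteq> -2" "(ff ^^ j) 2 \<noteq> 4"
    by simp_all
qed

lemma order_fiter_minus:
  assumes c: "c = -2 \<or> c = 4"
  shows "order \<mu> (fiter i - [:c:]) = of_bool ((ff ^^ i) \<mu> = c)"
proof (cases "(ff ^^ i) \<mu> = c")
  case True
  have "(ff ^^ k) \<mu> \<noteq> 2" if "k < i" for k
  proof
    assume "(ff ^^ k) \<mu> = 2"
    then have "(ff ^^ (i - k)) 2 = c"
      using True \<open>k < i\<close> by (metis funpow_add le_add_diff_inverse2 less_imp_le_nat o_apply)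
    with c funpow_ff_2_neq show False
      by blast
  qed
  then have "poly (pderiv (fiter i - [:c:])) \<mu> \<noteq> 0"
    by (simp add: pderiv_diff poly_pderiv_fiter)
  then show ?thesis
    using True by (simp add: order_eq_1I poly_fiter)
next
  case False
  then show ?thesis
    by (simp add: order_0I poly_fiter)
qed

lemma order_char_poly_Amat:
  "order \<mu> (char_poly (Amat n)) = of_bool (\<mu> = 6)
     + card {i. i < n \<and> (ff ^^ i) \<mu> = -2}
     + (\<Sum>i\<in>{i. i < n \<and> (ff ^^ i) \<mu> = 4}. 2 * 4 ^ (n - i - 1))"
proof -
  let ?P = "\<Prod>i<n. fiter i + [:2:]" and ?Q = "\<Prod>i<n. (fiter i - [:4:]) ^ (2 * 4 ^ (n - i - 1))"
  have plus_2: "fiter i + [:2:] = fiter i - [:-2:]" for i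
    by simp
  have lessThan_filter: "{..<n} \<inter> {i. P i} = {i. i < n \<and> P i}" for P
    by auto
  have "?P \<noteq> 0" and "?Q \<noteq> 0"
    unfolding plus_2 by (simp_all add: fiter_neq_const)
  then have nz: "[:-6, 1:] * ?P \<noteq> 0" "[:-6, 1:] * ?P * ?Q \<noteq> 0"
    by (intro no_zero_divisors; simp)+
  have "order \<mu> (char_poly (Amat n)) = order \<mu> [:-6, 1:] + order \<mu> ?P + order \<mu> ?Q"
    unfolding char_poly_Amat order_mult[OF nz(2)] order_mult[OF nz(1)] ..
  also have "order \<mu> [:-6, 1:] = of_bool (\<mu> = 6)"
    using order_power_n_n[of \<mu> 1] by (auto intro: order_0I)
  also have "order \<mu> ?P = (\<Sum>i<n. of_bool ((ff ^^ i) \<mu> = -2))"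
    unfolding plus_2 by (simp add: order_prod fiter_neq_const order_fiter_minus)
  also have "order \<mu> ?Q = (\<Sum>i<n. of_bool ((ff ^^ i) \<mu> = 4) * (2 * 4 ^ (n - i - 1)))"
    by (simp add: order_prod order_power fiter_neq_const order_fiter_minus)
  finally show ?thesis
    by (simp add: lessThan_filter)
qed

theorem theorem3p4:
  fixes n :: nat
  assumes "n \<ge> 1"
  shows "char_poly (Amat n) =
           [:-6, 1:] * (\<Prod>i<n. fiter i + [:2:])
             * (\<Prod>i<n. (fiter i - [:4:]) ^ (2 * 4 ^ (n - i - 1)))
         \<and> (\<forall>\<mu>::complex. order \<mu> (char_poly (Amat n)) =
           (if \<mu> = 6 then 1 else 0)
           + card {i. i < n \<and> (ff ^^ i) \<mu> = -2}
           + (\<Sum>i\<in>{i. i < n \<and> (ff ^^ i) \<mu> = 4}. 2 * 4 ^ (n - i - 1)))"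
  \<comment> \<open>The formula also holds for \<open>n = 0\<close>.\<close>
  using char_poly_Amat order_char_poly_Amat by (simp add: of_bool_def)

end
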